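(* Let $L$ be an oriented, ordered, compatible virtual link diagram with affine bilabeling $C$. Then the multi-variable affine index polynomial $p_{(L,C)}$ is a Vassiliev invariant of order one of the pair $(L,C)$. That is: - its extension vanishes on every compatible singular virtual link (with the induced coloring) having two or more double points; and - it does not vanish on every compatible singular virtual link with one double point. As a consequence, the following are also Vassiliev invariants of order one: - the Affine Index Polynomial $P_K(t)$ of virtual knots; and - Kauffman's affine index polynomial $P_L(t)$ of compatible virtual links with a given affine labeling.
   Context: **Diagrams.** A virtual link diagram is an oriented planar diagram of ordered closed curves $L_1,\dots,L_n$ (components) with classical crossings (with over/under information) and virtual crossings, up to classical and virtual Reidemeister moves. **Crossing conventions.** Draw a classical crossing with both strands oriented upward. - The bottom-left-to-top-right strand has index change $-1$; the bottom-right-to-top-left strand has index change $+1$. - The crossing is positive ($\operatorname{sgn}=+1$) if the overstrand is the bottom-left-to-top-right strand, and negative otherwise. - Self-crossings have both strands on one component; external crossings have strands on different components. - $L$ is compatible if, for each $i$, the sum of index changes of $L_i$ over its passages through external classical crossings is $0$. **Affine bilabeling $C$.** - Each component $L_i$ gets a starting point with bilabel $(a^{(i)}_1,a^{(i)}_2)$ of formal integer variables, distinct for different components. - The bilabel is carried along $L_i$ in its orientation and is unchanged at virtual crossings. - On passing a classical crossing with index change $\varepsilon$, the first entry changes by $\varepsilon$ at a self-crossing, and the second entry changes by $\varepsilon$ at an external crossing. **Weights and polynomial.** Let $|(x,y)|=x+y$. With both strands drawn upward: - if $c$ is positive, $W(c)=|\text{bottom-left}|-|\text{top-left}|$; - if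 $c$ is negative, $W(c)=|\text{bottom-right}|-|\text{top-right}|$. Then $p_{(L,C)}(t_1,\dots,t_n)=\sum_c\operatorname{sgn}(c)(t_{o(c)}^{W(c)}-1)$, summed over classical crossings, where $o(c)$ is the component of the overstrand. **Kauffman's polynomial.** - A single label per component is propagated by adding the index change at every classical crossing. - Weights are the same differences of single labels. - $P_L(t)=\sum_c\operatorname{sgn}(c)(t^{W(c)}-1)$. - For a virtual knot this is the Affine Index Polynomial $P_K(t)$. **Vassiliev invariants.** - A singular virtual link also has finitely many double points. - An invariant $V$ is extended to singular links by $V(L_\times)=V(L_+)-V(L_-)$, where $L_\pm$ replace a double point by a positive/negative classical crossing; this is applied iteratively. - Colorings of singular links are obtained by treating double points as crossings for label propagation. Label propagation does not depend on crossing sign, so all resolutions inherit the same labels. - $V$ has order $\le m$ if its extension vanishes on all singular links with more than $m$ double points. - Order one means order $\le 1$ but not order $\le 0$. *)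

theory Defs
  imports Main
begin

text \<open>Combinatorial (Gauss-code) model of oriented, ordered singular virtual link
diagrams.  Drawing a
crossing with both strands oriented upward, the strand SL runs bottom-left to top-right
(index change -1) and SR runs bottom-right to top-left (index change +1).  Each
component is the list of passages through crossings, read along its orientation starting
from its starting point.  Virtual crossings are invisible in this model (they do not
affect labels); every such Gauss code is realised by a virtual diagram.\<close>

datatype ctype = Pos | Neg | Dbl
datatype strand = SL | SR

record vdiagram =
  comps :: "(nat \<times> strand) list list"
  ncross :: nat
  ctyp :: "nat \<Rightarrow> ctype"

definition wf_diagram :: "vdiagram \<Rightarrow> bool" where
  "wf_diagram D \<longleftrightarrow> comps D \<noteq> [] \<and> distinct (concat (comps D))
     \<and> set (concat (comps D)) = {0..<ncross D} \<times> UNIV"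

definition idx_change :: "strand \<Rightarrow> int" where
  "idx_change s = (case s of SL \<Rightarrow> -1 | SR \<Rightarrow> 1)"

definition comp_of :: "vdiagram \<Rightarrow> nat \<times> strand \<Rightarrow> nat" where
  "comp_of D p = (THE i. i < length (comps D) \<and> p \<in> set (comps D ! i))"

definition pos_of :: "vdiagram \<Rightarrow> nat \<times> strand \<Rightarrow> nat" where
  "pos_of D p = (THE j. j < length (comps D ! comp_of D p) \<and> comps D ! comp_of D p ! j = p)"

definition is_self :: "vdiagram \<Rightarrow> nat \<Rightarrow> bool" where
  "is_self D k \<longleftrightarrow> comp_of D (k, SL) = comp_of D (k, SR)"

definition dbls :: "vdiagram \<Rightarrow> nat set" where
  "dbls D = {k. k < ncross D \<and> ctyp D k = Dbl}"

definition classical_crossings :: "vdiagram \<Rightarrow> nat set" where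
  "classical_crossings D = {k. k < ncross D \<and> ctyp D k \<noteq> Dbl}"

text \<open>Compatibility (double points are counted as crossings; their index changes are
the same in both resolutions).\<close>
definition compatible :: "vdiagram \<Rightarrow> bool" where
  "compatible D \<longleftrightarrow> (\<forall>i < length (comps D).
     (\<Sum>p\<leftarrow>comps D ! i. if is_self D (fst p) then 0 else idx_change (snd p)) = 0)"

definition csign :: "vdiagram \<Rightarrow> nat \<Rightarrow> int" where
  "csign D k = (case ctyp D k of Pos \<Rightarrow> 1 | Neg \<Rightarrow> -1 | Dbl \<Rightarrow> 0)"

definition over_comp :: "vdiagram \<Rightarrow> nat \<Rightarrow> nat" where
  "over_comp D k = (case ctyp D k of Pos \<Rightarrow> comp_of D (k, SL) | _ \<Rightarrow> comp_of D (k, SR))"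

subsection \<open>Formal linear forms in the variables a^(i)_j (j = 1,2), plus a constant\<close>

type_synonym lform = "(nat \<times> nat \<Rightarrow> int) \<times> int"

definition lvar :: "nat \<times> nat \<Rightarrow> lform" where
  "lvar v = ((\<lambda>w. if w = v then 1 else 0), 0)"
definition lconst :: "int \<Rightarrow> lform" where
  "lconst c = ((\<lambda>_. 0), c)"
definition ladd :: "lform \<Rightarrow> lform \<Rightarrow> lform" where
  "ladd x y = ((\<lambda>w. fst x w + fst y w), snd x + snd y)"
definition lsub :: "lform \<Rightarrow> lform \<Rightarrow> lform" where
  "lsub x y = ((\<lambda>w. fst x w - fst y w), snd x - snd y)"

text \<open>Bilabel on component i just before its j-th passage (0-based); the start bilabel
of component i is (a^(i)_1, a^(i)_2) = (lvar (i,1), lvar (i,2)).\<close>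
definition bilabel_before :: "vdiagram \<Rightarrow> nat \<Rightarrow> nat \<Rightarrow> lform \<times> lform" where
  "bilabel_before D i j =
     (ladd (lvar (i, 1)) (lconst (\<Sum>p\<leftarrow>take j (comps D ! i).
         if is_self D (fst p) then idx_change (snd p) else 0)),
      ladd (lvar (i, 2)) (lconst (\<Sum>p\<leftarrow>take j (comps D ! i).
         if is_self D (fst p) then 0 else idx_change (snd p))))"

definition bilab_in :: "vdiagram \<Rightarrow> nat \<times> strand \<Rightarrow> lform \<times> lform" where
  "bilab_in D p = bilabel_before D (comp_of D p) (pos_of D p)"
definition bilab_out :: "vdiagram \<Rightarrow> nat \<times> strand \<Rightarrow> lform \<times> lform" where
  "bilab_out D p = bilabel_before D (comp_of D p) (Suc (pos_of D p))"

definition bnorm :: "lform \<times> lform \<Rightarrow> lform" where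
  "bnorm x = ladd (fst x) (snd x)"

text \<open>Positive: |bottom-left| - |top-left|; negative: |bottom-right| - |top-right|.\<close>
definition mweight :: "vdiagram \<Rightarrow> nat \<Rightarrow> lform" where
  "mweight D k = (case ctyp D k of
      Pos \<Rightarrow> lsub (bnorm (bilab_in D (k, SL))) (bnorm (bilab_out D (k, SR)))
    | _ \<Rightarrow> lsub (bnorm (bilab_in D (k, SR))) (bnorm (bilab_out D (k, SL))))"

text \<open>Monomials t_o^W: None is the monomial 1, Some (o, W) with W nonzero is t_o^W.
A formal sum of monomials is a (finitely supported) coefficient function.\<close>
definition mono :: "nat \<Rightarrow> lform \<Rightarrow> (nat \<times> lform) option" where
  "mono c W = (if W = lconst 0 then None else Some (c, W))"

definition mvaip :: "vdiagram \<Rightarrow> (nat \<times> lform) option \<Rightarrow> int" where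
  "mvaip D = (\<lambda>m. \<Sum>k\<in>classical_crossings D.
      csign D k * ((if mono (over_comp D k) (mweight D k) = m then 1 else 0)
                   - (if m = None then 1 else 0)))"

definition label_before :: "vdiagram \<Rightarrow> (nat \<Rightarrow> int) \<Rightarrow> nat \<Rightarrow> nat \<Rightarrow> int" where
  "label_before D b i j = b i + (\<Sum>p\<leftarrow>take j (comps D ! i). idx_change (snd p))"

definition lab_in :: "vdiagram \<Rightarrow> (nat \<Rightarrow> int) \<Rightarrow> nat \<times> strand \<Rightarrow> int" where
  "lab_in D b p = label_before D b (comp_of D p) (pos_of D p)"
definition lab_out :: "vdiagram \<Rightarrow> (nat \<Rightarrow> int) \<Rightarrow> nat \<times> strand \<Rightarrow> int" where
  "lab_out D b p = label_before D b (comp_of D p) (Suc (pos_of D p))"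

definition kweight :: "vdiagram \<Rightarrow> (nat \<Rightarrow> int) \<Rightarrow> nat \<Rightarrow> int" where
  "kweight D b k = (case ctyp D k of
      Pos \<Rightarrow> lab_in D b (k, SL) - lab_out D b (k, SR)
    | _ \<Rightarrow> lab_in D b (k, SR) - lab_out D b (k, SL))"

text \<open>Laurent polynomial in t as coefficient function on exponents.\<close>
definition kaip :: "vdiagram \<Rightarrow> (nat \<Rightarrow> int) \<Rightarrow> int \<Rightarrow> int" where
  "kaip D b = (\<lambda>e. \<Sum>k\<in>classical_crossings D.
      csign D k * ((if kweight D b k = e then 1 else 0) - (if e = 0 then 1 else 0)))"

definition resolve :: "vdiagram \<Rightarrow> nat set \<Rightarrow> vdiagram" where
  "resolve D S = D\<lparr>ctyp := (\<lambda>k. if ctyp D k = Dbl then (if k \<in> S then Pos else Neg)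
                                 else ctyp D k)\<rparr>"

text \<open>Iterating V(L_x) = V(L_+) - V(L_-) over all double points.\<close>
definition vext :: "(vdiagram \<Rightarrow> 'k \<Rightarrow> int) \<Rightarrow> vdiagram \<Rightarrow> 'k \<Rightarrow> int" where
  "vext V D = (\<lambda>m. \<Sum>S\<in>Pow (dbls D). (-1::int) ^ card (dbls D - S) * V (resolve D S) m)"

end

theory Submission
  imports Defs
begin

text \<open>Both polynomials are sums over the classical crossings of a term that depends only
on the type of that crossing and on labels, and labels are propagated independently of
crossing signs.  So in the alternating sum over the resolutions of at least two double
points, the contribution of a crossing k is unchanged when a double point j \<noteq> k is
switched, and these contributions cancel in pairs.  Conversely, the virtual trefoil with one crossing made
singular has extension t + 1/t - 2, in the variable of its only component.\<close>

lemma sum_Pow_eq_0_if_insert_negates: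
  fixes F :: "'a set \<Rightarrow> 'b::ab_group_add"
  assumes "finite T" "j \<in> T" "\<And>S. S \<subseteq> T - {j} \<Longrightarrow> F (insert j S) = - F S"
  shows "(\<Sum>S\<in>Pow T. F S) = 0"
proof -
  let ?T' = "T - {j}"
  have "Pow T = Pow ?T' \<union> insert j ` Pow ?T'"
    using assms(2) by (metis Pow_insert insert_Diff)
  moreover have "Pow ?T' \<inter> insert j ` Pow ?T' = {}"
    by auto
  ultimately have "(\<Sum>S\<in>Pow T. F S) = (\<Sum>S\<in>Pow ?T'. F S) + (\<Sum>S\<in>insert j ` Pow ?T'. F S)"
    using assms(1) by (simp add: sum.union_disjoint)
  also have "(\<Sum>S\<in>insert j ` Pow ?T'. F S) = (\<Sum>S\<in>Pow ?T'. F (insert j S))"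
    by (rule sum.reindex_cong[where l = "insert j"]) (auto intro!: inj_onI)
  also have "\<dots> = (\<Sum>S\<in>Pow ?T'. - F S)"
    by (rule sum.cong) (use assms(3) in auto)
  finally show ?thesis
    by (simp add: sum_negf)
qed

lemma alternating_sum_Pow_eq_0:
  fixes f :: "'a set \<Rightarrow> 'b::ring_1"
  assumes "finite T" "j \<in> T" "\<And>S. S \<subseteq> T - {j} \<Longrightarrow> f (insert j S) = f S"
  shows "(\<Sum>S\<in>Pow T. (-1) ^ card (T - S) * f S) = 0"
proof (rule sum_Pow_eq_0_if_insert_negates[OF assms(1,2)])
  fix S assume S: "S \<subseteq> T - {j}"
  then have "T - S = insert j (T - insert j S)" and "j \<notin> T - insert j S"
    using assms(2) by auto
  then have "card (T - S) = Suc (card (T - insert j S))"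
    using assms(1) by (metis card_insert_disjoint finite_Diff)
  with assms(3)[OF S] show "(-1) ^ card (T - insert j S) * f (insert j S) = - ((-1) ^ card (T - S) * f S)"
    by simp
qed

lemma vext_single_double_point:
  assumes "dbls D = {d}"
  shows "vext V D m = V (resolve D {d}) m - V (resolve D {}) m"
proof -
  have "Pow {d} = {{}, {d}}"
    by auto
  then show ?thesis
    by (simp add: vext_def assms)
qed

lemma resolve_simps [simp]:
  "comps (resolve D S) = comps D"
  "ncross (resolve D S) = ncross D"
  "ctyp (resolve D S) k = (if ctyp D k = Dbl then if k \<in> S then Pos else Neg else ctyp D k)"
  by (simp_all add: resolve_def)

lemma resolve_preserves_labels [simp]:
  "comp_of (resolve D S) = comp_of D"
  "pos_of (resolve D S) = pos_of D"
  "is_self (resolve D S) = is_self D"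
  "bilab_in (resolve D S) = bilab_in D"
  "bilab_out (resolve D S) = bilab_out D"
  "lab_in (resolve D S) = lab_in D"
  "lab_out (resolve D S) = lab_out D"
  by (simp_all add: comp_of_def pos_of_def is_self_def bilab_in_def bilab_out_def
      bilabel_before_def lab_in_def lab_out_def label_before_def fun_eq_iff)

lemma classical_crossings_resolve: "classical_crossings (resolve D S) = {..<ncross D}"
  by (auto simp: classical_crossings_def)

lemma vext_eq_0_if_crossingwise:
  assumes card: "2 \<le> card (dbls D)"
    and sum: "\<And>S. V (resolve D S) m = (\<Sum>k<ncross D. t S k)"
    and locality: "\<And>S S' k. (k \<in> S \<longleftrightarrow> k \<in> S') \<Longrightarrow> t S k = t S' k"
  shows "vext V D m = 0"
proof -
  let ?T = "dbls D"
  have fin: "finite ?T"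
    using card by (metis card.infinite not_numeral_le_zero)
  have "vext V D m = (\<Sum>k<ncross D. \<Sum>S\<in>Pow ?T. (-1) ^ card (?T - S) * t S k)"
    by (simp add: vext_def sum sum_distrib_left sum.swap[of _ "Pow ?T"])
  also have "\<dots> = 0"
  proof (rule sum.neutral, rule ballI)
    fix k
    have "\<not> ?T \<subseteq> {k}"
      using card card_mono[of "{k}" ?T] by auto
    then obtain j where "j \<in> ?T" "j \<noteq> k"
      by blast
    then show "(\<Sum>S\<in>Pow ?T. (-1) ^ card (?T - S) * t S k) = 0"
      by (intro alternating_sum_Pow_eq_0[OF fin]) (auto intro: locality)
  qed
  finally show ?thesis .
qed

definition mvaip_term :: "vdiagram \<Rightarrow> nat \<Rightarrow> (nat \<times> lform) option \<Rightarrow> int" where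
  "mvaip_term D k m = csign D k * ((if mono (over_comp D k) (mweight D k) = m then 1 else 0)
                                   - (if m = None then 1 else 0))"

definition kaip_term :: "vdiagram \<Rightarrow> (nat \<Rightarrow> int) \<Rightarrow> nat \<Rightarrow> int \<Rightarrow> int" where
  "kaip_term D b k e = csign D k * ((if kweight D b k = e then 1 else 0) - (if e = 0 then 1 else 0))"

lemma mvaip_resolve_eq_sum_terms:
  "mvaip (resolve D S) m = (\<Sum>k<ncross D. mvaip_term (resolve D S) k m)"
  by (simp add: mvaip_def mvaip_term_def classical_crossings_resolve)

lemma kaip_resolve_eq_sum_terms:
  "kaip (resolve D S) b e = (\<Sum>k<ncross D. kaip_term (resolve D S) b k e)"
  by (simp add: kaip_def kaip_term_def classical_crossings_resolve)

lemma mvaip_term_resolve_cong: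
  "(k \<in> S \<longleftrightarrow> k \<in> S') \<Longrightarrow> mvaip_term (resolve D S) k m = mvaip_term (resolve D S') k m"
  by (simp add: mvaip_term_def csign_def over_comp_def mweight_def split: ctype.split)

lemma kaip_term_resolve_cong:
  "(k \<in> S \<longleftrightarrow> k \<in> S') \<Longrightarrow> kaip_term (resolve D S) b k e = kaip_term (resolve D S') b k e"
  by (simp add: kaip_term_def csign_def kweight_def split: ctype.split)

lemma vext_mvaip_eq_0:
  assumes "2 \<le> card (dbls D)"
  shows "vext mvaip D = (\<lambda>_. 0)"
proof
  fix m
  show "vext mvaip D m = 0"
    by (rule vext_eq_0_if_crossingwise[where t = "\<lambda>S k. mvaip_term (resolve D S) k m"])
    (fact assms mvaip_resolve_eq_sum_terms mvaip_term_resolve_cong)+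
qed

lemma vext_kaip_eq_0:
  assumes "2 \<le> card (dbls D)"
  shows "vext (\<lambda>D'. kaip D' b) D = (\<lambda>_. 0)"
proof
  fix e
  show "vext (\<lambda>D'. kaip D' b) D e = 0"
    by (rule vext_eq_0_if_crossingwise[where t = "\<lambda>S k. kaip_term (resolve D S) b k e"])
    (fact assms kaip_resolve_eq_sum_terms kaip_term_resolve_cong)+
qed

text \<open>The virtual trefoil, Gauss code O0 O1 U0 U1, with crossing 0 made singular.\<close>
definition singular_trefoil :: vdiagram where
  "singular_trefoil = \<lparr>comps = [[(0, SL), (1, SL), (0, SR), (1, SR)]], ncross = 2,
                        ctyp = (\<lambda>k. if k = 0 then Dbl else Pos)\<rparr>"

lemma singular_trefoil_simps [simp]:
  "comps singular_trefoil = [[(0, SL), (1, SL), (0, SR), (1, SR)]]"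
  "ncross singular_trefoil = 2"
  "ctyp singular_trefoil k = (if k = 0 then Dbl else Pos)"
  by (simp_all add: singular_trefoil_def)

lemma comp_of_singular_trefoil [simp]:
  "comp_of singular_trefoil (k, s) = 0" if "k < 2"
  unfolding comp_of_def
  by (rule the_equality) (use that in \<open>auto simp: less_Suc_eq intro: strand.exhaust[of s]\<close>)

lemma pos_of_singular_trefoil [simp]:
  "pos_of singular_trefoil (0, SL) = 0" "pos_of singular_trefoil (Suc 0, SL) = 1"
  "pos_of singular_trefoil (0, SR) = 2" "pos_of singular_trefoil (Suc 0, SR) = 3"
  unfolding pos_of_def by (simp_all, (rule the_equality, auto simp: less_Suc_eq)+)

lemma is_self_singular_trefoil [simp]: "k < 2 \<Longrightarrow> is_self singular_trefoil k"
  by (simp add: is_self_def)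

lemma wf_singular_trefoil: "wf_diagram singular_trefoil"
proof -
  have "(UNIV :: strand set) = {SL, SR}"
    using strand.exhaust by auto
  then show ?thesis
    by (auto simp: wf_diagram_def)
qed

lemma compatible_singular_trefoil: "compatible singular_trefoil"
  by (simp add: compatible_def)

lemma dbls_singular_trefoil: "dbls singular_trefoil = {0}"
  by (auto simp: dbls_def)

lemma vext_mvaip_singular_trefoil: "vext mvaip singular_trefoil None = -2"
  by (simp add: vext_single_double_point[OF dbls_singular_trefoil] mvaip_resolve_eq_sum_terms
      mvaip_term_def numeral_2_eq_2 csign_def mono_def mweight_def over_comp_def
      bilab_in_def bilab_out_def bilabel_before_def bnorm_def ladd_def lsub_def lconst_def
      lvar_def idx_change_def)

lemma vext_kaip_singular_trefoil: "vext (\<lambda>D. kaip D b) singular_trefoil 0 = -2"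
  by (simp add: vext_single_double_point[OF dbls_singular_trefoil] kaip_resolve_eq_sum_terms
      kaip_term_def numeral_2_eq_2 csign_def kweight_def lab_in_def lab_out_def
      label_before_def idx_change_def)

theorem proposition5:
  shows
   "((\<forall>D. wf_diagram D \<and> compatible D \<and> card (dbls D) \<ge> 2 \<longrightarrow> vext mvaip D = (\<lambda>_. 0))
     \<and> (\<exists>D. wf_diagram D \<and> compatible D \<and> card (dbls D) = 1 \<and> vext mvaip D \<noteq> (\<lambda>_. 0)))
    \<and> ((\<forall>D b. wf_diagram D \<and> length (comps D) = 1 \<and> card (dbls D) \<ge> 2
            \<longrightarrow> vext (\<lambda>D'. kaip D' b) D = (\<lambda>_. 0))
     \<and> (\<exists>D b. wf_diagram D \<and> length (comps D) = 1 \<and> card (dbls D) = 1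
            \<and> vext (\<lambda>D'. kaip D' b) D \<noteq> (\<lambda>_. 0)))
    \<and> ((\<forall>D b. wf_diagram D \<and> compatible D \<and> card (dbls D) \<ge> 2
            \<longrightarrow> vext (\<lambda>D'. kaip D' b) D = (\<lambda>_. 0))
     \<and> (\<exists>D b. wf_diagram D \<and> compatible D \<and> card (dbls D) = 1
            \<and> vext (\<lambda>D'. kaip D' b) D \<noteq> (\<lambda>_. 0)))"
proof -
  have witness: "wf_diagram singular_trefoil" "compatible singular_trefoil"
    "length (comps singular_trefoil) = 1" "card (dbls singular_trefoil) = 1"
    by (simp_all add: wf_singular_trefoil compatible_singular_trefoil dbls_singular_trefoil)
  have "vext mvaip singular_trefoil \<noteq> (\<lambda>_. 0)"
    using vext_mvaip_singular_trefoil by (metis zero_neq_neg_numeral)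
  moreover have "vext (\<lambda>D. kaip D b) singular_trefoil \<noteq> (\<lambda>_. 0)" for b
    using vext_kaip_singular_trefoil by (metis zero_neq_neg_numeral)
  ultimately show ?thesis
    using witness vext_mvaip_eq_0 vext_kaip_eq_0 by blast
qed

end
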